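(* Let $n\geq7$, let $u,v,u',v'\in G(J(P_n))$ with $u>_{\mathcal R}v$ and $u'>_{\mathcal R}v'$, and suppose $u'v'$ divides $uv$. (1) If $u\in\mathcal A$ and $v\in\mathcal C$, then $u'\in\mathcal A$ and $v'\in\mathcal C$. (2) If $u\in\mathcal B$ and $v\in\mathcal C$, then $u'\in\mathcal B$ and $v'\in\mathcal C$.
   Context: For $m\geq 1$, $P_m$ is the path graph on vertices $x_1,\ldots,x_m$ with edges $\{x_i,x_{i+1}\}$; $J(P_m)$ is its cover ideal (generated by $\prod_{x\in C}x$, $C$ a minimal vertex cover) and $G(I)$ denotes minimal monomial generators. The rooted list $\mathcal R(P_m)$: $\mathcal R(P_1)$ empty; $\mathcal R(P_2)=x_1,x_2$; $\mathcal R(P_3)=x_2,x_1x_3$; $\mathcal R(P_4)=x_1x_3,x_2x_3,x_2x_4$; for $m\geq5$, if $\mathcal R(P_{m-2})=u_1,\ldots,u_r$ and $\mathcal R(P_{m-3})=v_1,\ldots,v_s$, then $\mathcal R(P_m)=x_{m-1}u_1,\ldots,x_{m-1}u_r,x_mx_{m-2}v_1,\ldots,x_mx_{m-2}v_s$; it lists each element of $G(J(P_m))$ once, and $w>_{\mathcal R}w'$ iff $w$ precedes $w'$ in $\mathcal R(P_m)$. For $n\geq7$ the elements of $\mathcal R(P_n)$ are split into four sublists: $\mathcal A$ = those divisible by $x_{n-1}x_{n-3}$ (these are $x_{n-1}x_{n-3}w$, $w\in\mathcal R(P_{n-4})$); $\mathcal B$ = those divisible by $x_{n-1}$ but not $x_{n-3}$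 (these are $x_{n-1}x_{n-2}x_{n-4}w$, $w\in\mathcal R(P_{n-5})$); $\mathcal C$ = those divisible by $x_nx_{n-4}$ (these are $x_nx_{n-2}x_{n-4}w$, $w\in\mathcal R(P_{n-5})$); $\mathcal D$ = those divisible by $x_n$ but not $x_{n-4}$ (these are divisible by $x_nx_{n-2}x_{n-3}$). $\mathcal R(P_n)$ is the concatenation $\mathcal A,\mathcal B,\mathcal C,\mathcal D$. *)

theory Defs
  imports Main "HOL-Library.Multiset"
begin

text \<open>Vertices of the path graph P_m are the indices 1..m (x_i is index i);
  edges are {i, i+1} for 1 <= i < m.  A squarefree monomial prod_{x in C} x is
  represented by its support C :: nat set; general monomials (products) are
  represented as multisets of variable indices (exponent = multiplicity).\<close>

definition is_vertex_cover :: "nat \<Rightarrow> nat set \<Rightarrow> bool" where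
  "is_vertex_cover m C \<longleftrightarrow> C \<subseteq> {1..m} \<and> (\<forall>i. 1 \<le> i \<and> i < m \<longrightarrow> i \<in> C \<or> Suc i \<in> C)"

definition is_min_vertex_cover :: "nat \<Rightarrow> nat set \<Rightarrow> bool" where
  "is_min_vertex_cover m C \<longleftrightarrow> is_vertex_cover m C \<and> (\<forall>D. D \<subset> C \<longrightarrow> \<not> is_vertex_cover m D)"

definition cover_gens :: "nat \<Rightarrow> nat set set" where
  "cover_gens m = {C. is_min_vertex_cover m C}"

definition mon :: "nat set \<Rightarrow> nat multiset" where
  "mon C = mset_set C"

definition mdvd :: "nat multiset \<Rightarrow> nat multiset \<Rightarrow> bool" where
  "mdvd a b \<longleftrightarrow> a \<subseteq># b"

fun rooted :: "nat \<Rightarrow> nat set list" where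
  "rooted 0 = []"
| "rooted (Suc 0) = []"
| "rooted (Suc (Suc 0)) = [{1}, {2}]"
| "rooted (Suc (Suc (Suc 0))) = [{2}, {1, 3}]"
| "rooted (Suc (Suc (Suc (Suc 0)))) = [{1, 3}, {2, 3}, {2, 4}]"
| "rooted (Suc (Suc (Suc (Suc (Suc k))))) =
     map (insert (k + 4)) (rooted (k + 3)) @
     map (\<lambda>w. {k + 5, k + 3} \<union> w) (rooted (k + 2))"

definition R_greater :: "nat \<Rightarrow> nat set \<Rightarrow> nat set \<Rightarrow> bool" where
  "R_greater m w w' \<longleftrightarrow>
     (\<exists>i j. i < j \<and> j < length (rooted m) \<and> rooted m ! i = w \<and> rooted m ! j = w')"

definition subA :: "nat \<Rightarrow> nat set \<Rightarrow> bool" where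
  "subA n w \<longleftrightarrow> w \<in> set (rooted n) \<and> n - 1 \<in> w \<and> n - 3 \<in> w"
definition subB :: "nat \<Rightarrow> nat set \<Rightarrow> bool" where
  "subB n w \<longleftrightarrow> w \<in> set (rooted n) \<and> n - 1 \<in> w \<and> n - 3 \<notin> w"
definition subC :: "nat \<Rightarrow> nat set \<Rightarrow> bool" where
  "subC n w \<longleftrightarrow> w \<in> set (rooted n) \<and> n \<in> w \<and> n - 4 \<in> w"
definition subD :: "nat \<Rightarrow> nat set \<Rightarrow> bool" where
  "subD n w \<longleftrightarrow> w \<in> set (rooted n) \<and> n \<in> w \<and> n - 4 \<notin> w"

end

theory Submission
  imports Defs
begin

(* Every vertex of a minimal vertex cover of a path has a neighbour outside the cover. Together
   with the covering condition and the multiplicity bound [x in u'] + [x in v'] <= [x in u] + [x in v]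
   coming from u'v' | uv, this determines membership of x_n, ..., x_(n-4) in u' and v' step by step.
   The order enters only once: if x_(n-1) were not in u', then u' and its successor v' would both lie
   in the second half of R(P_n) and so both contain x_n, which occurs only in v. *)

lemma vertex_coverD:
  assumes "is_vertex_cover m C" "1 \<le> i" "i < m"
  shows "i \<in> C \<or> Suc i \<in> C"
  using assms unfolding is_vertex_cover_def by blast

lemma min_vertex_coverD: "is_min_vertex_cover m C \<Longrightarrow> is_vertex_cover m C"
  unfolding is_min_vertex_cover_def by blast

lemma min_vertex_cover_private_neighbour:
  assumes "is_min_vertex_cover m C" "x \<in> C"
  shows "(1 < x \<and> x - 1 \<notin> C) \<or> (x < m \<and> Suc x \<notin> C)"
proof -
  have cover: "is_vertex_cover m C" using min_vertex_coverD assms(1) .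
  have "\<not> is_vertex_cover m (C - {x})"
    using assms unfolding is_min_vertex_cover_def by blast
  moreover have "C - {x} \<subseteq> {1..m}"
    using cover unfolding is_vertex_cover_def by blast
  ultimately obtain i where "1 \<le> i" "i < m" "i \<notin> C - {x}" "Suc i \<notin> C - {x}"
    unfolding is_vertex_cover_def by blast
  with vertex_coverD[OF cover] show ?thesis by fastforce
qed

lemma min_vertex_cover_last:
  assumes "is_min_vertex_cover m C" "m \<in> C"
  shows "m - 1 \<notin> C"
  using min_vertex_cover_private_neighbour[OF assms] by simp

lemma min_vertex_cover_no_three_consecutive:
  assumes "is_min_vertex_cover m C" "Suc i \<in> C" "i \<in> C" "Suc (Suc i) \<in> C"
  shows "i = 0"
  using min_vertex_cover_private_neighbour[OF assms(1,2)] assms(3,4) by auto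

lemma finite_min_vertex_cover:
  "is_min_vertex_cover m C \<Longrightarrow> finite C"
  using min_vertex_coverD finite_subset unfolding is_vertex_cover_def by blast

lemma mdvd_mon_add_count:
  assumes "finite a" "finite b" "finite c" "finite d"
    and "mdvd (mon a + mon b) (mon c + mon d)"
  shows "of_bool (x \<in> a) + of_bool (x \<in> b) \<le> (of_bool (x \<in> c) + of_bool (x \<in> d) :: nat)"
proof -
  have "count (mon a + mon b) x \<le> count (mon c + mon d) x"
    using assms(5) unfolding mdvd_def by (rule mset_subset_eq_count)
  then show ?thesis
    using assms(1-4) unfolding mon_def by (auto simp: count_mset_set' split: if_splits)
qed

lemma R_greater_in_rooted:
  "R_greater m w w' \<Longrightarrow> w \<in> set (rooted m) \<and> w' \<in> set (rooted m)"
  unfolding R_greater_def by auto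

lemma R_greater_last:
  assumes "5 \<le> m" "R_greater m w w'" "m - 1 \<notin> w"
  shows "m \<in> w" "m \<in> w'"
proof -
  obtain k where m: "m = k + 5"
    using le_Suc_ex[OF assms(1)] by (auto simp: add.commute)
  define L1 where "L1 = map (insert (k + 4)) (rooted (k + 3))"
  define L2 where "L2 = map (\<lambda>w. {k + 5, k + 3} \<union> w) (rooted (k + 2))"
  have rooted_m: "rooted m = L1 @ L2"
    unfolding m L1_def L2_def by (simp add: numeral_eq_Suc)
  obtain i j where ij: "i < j" "j < length (rooted m)" "rooted m ! i = w" "rooted m ! j = w'"
    using assms(2) unfolding R_greater_def by blast
  have "\<not> i < length L1"
  proof
    assume "i < length L1"
    then have "w \<in> set L1" using ij unfolding rooted_m by (auto simp: nth_append)
    then show False using assms(3) unfolding L1_def m by auto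
  qed
  then have "w \<in> set L2" "w' \<in> set L2"
    using ij unfolding rooted_m by (auto simp: nth_append)
  then show "m \<in> w" "m \<in> w'"
    unfolding L2_def m by auto
qed

lemma min_vertex_cover_tail:
  assumes "is_min_vertex_cover n w" "5 \<le> n" "n \<in> w" "n - 4 \<in> w"
  shows "n - 2 \<in> w" "n - 3 \<notin> w"
proof -
  have cover: "is_vertex_cover n w" using min_vertex_coverD assms(1) .
  have "n - 1 \<notin> w" using min_vertex_cover_last assms(1,3) .
  then show "n - 2 \<in> w"
    using vertex_coverD[OF cover, of "n - 2"] assms(2) by (simp add: Suc_diff_Suc numeral_eq_Suc)
  then show "n - 3 \<notin> w"
    using min_vertex_cover_no_three_consecutive[OF assms(1), of "n - 4"] assms(2,4)
    by (auto simp: Suc_diff_Suc numeral_eq_Suc)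
qed

locale dividing_generators =
  fixes n :: nat and u v u' v' :: "nat set"
  assumes min_u: "is_min_vertex_cover n u" and min_v: "is_min_vertex_cover n v"
    and min_u': "is_min_vertex_cover n u'" and min_v': "is_min_vertex_cover n v'"
    and ordered: "R_greater n u' v'"
    and divides: "mdvd (mon u' + mon v') (mon u + mon v)"
begin

lemma count_le: "of_bool (x \<in> u') + of_bool (x \<in> v') \<le> (of_bool (x \<in> u) + of_bool (x \<in> v) :: nat)"
  using mdvd_mon_add_count[OF finite_min_vertex_cover[OF min_u'] finite_min_vertex_cover[OF min_v']
      finite_min_vertex_cover[OF min_u] finite_min_vertex_cover[OF min_v] divides] .

lemma in_both_divisors: "x \<in> u' \<Longrightarrow> x \<in> v' \<Longrightarrow> x \<in> u \<and> x \<in> v"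
  using count_le[of x] by (auto simp: of_bool_def split: if_splits)

lemma in_some_divisor: "x \<in> u' \<or> x \<in> v' \<Longrightarrow> x \<in> u \<or> x \<in> v"
  using count_le[of x] by (auto simp: of_bool_def split: if_splits)

lemma last_vertices:
  assumes "5 \<le> n" "n - 1 \<in> u" "n \<in> v"
  shows "n - 1 \<in> u'" "n - 1 \<notin> v'" "n \<in> v'" "n - 2 \<in> v'"
proof -
  have cover: "is_vertex_cover n v'" using min_vertex_coverD min_v' .
  have "n \<notin> u" using min_vertex_cover_last[OF min_u] assms(2) by blast
  then have "n \<notin> u' \<or> n \<notin> v'" using in_both_divisors by blast
  then show u': "n - 1 \<in> u'" using R_greater_last[OF assms(1) ordered] by blast
  have "n - 1 \<notin> v" using min_vertex_cover_last[OF min_v assms(3)] .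
  then show v': "n - 1 \<notin> v'" using in_both_divisors u' by blast
  show "n \<in> v'"
    using vertex_coverD[OF cover, of "n - 1"] v' assms(1) by simp
  show "n - 2 \<in> v'"
    using vertex_coverD[OF cover, of "n - 2"] v' assms(1) by (simp add: Suc_diff_Suc numeral_eq_Suc)
qed

lemma A_C_divisors:
  assumes "7 \<le> n" "subA n u" "subC n v"
  shows "subA n u' \<and> subC n v'"
proof -
  have u: "n - 1 \<in> u" "n - 3 \<in> u" and v: "n \<in> v" "n - 4 \<in> v"
    using assms(2,3) unfolding subA_def subC_def by auto
  have v_end: "n - 2 \<in> v" "n - 3 \<notin> v"
    using min_vertex_cover_tail[OF min_v _ v] assms(1) by auto
  have last: "n - 1 \<in> u'" "n \<in> v'" "n - 2 \<in> v'"
    using last_vertices u(1) v(1) assms(1) by auto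
  have "n - 2 \<notin> u"
    using min_vertex_cover_no_three_consecutive[OF min_u, of "n - 3"] u assms(1)
    by (auto simp: Suc_diff_Suc numeral_eq_Suc)
  then have "n - 2 \<notin> u'" using in_both_divisors last(3) by blast
  then have u'3: "n - 3 \<in> u'"
    using vertex_coverD[OF min_vertex_coverD[OF min_u'], of "n - 3"] assms(1) by (simp add: Suc_diff_Suc numeral_eq_Suc)
  then have "n - 3 \<notin> v'" using in_both_divisors v_end(2) by blast
  then have "n - 4 \<in> v'"
    using vertex_coverD[OF min_vertex_coverD[OF min_v'], of "n - 4"] assms(1) by (simp add: Suc_diff_Suc numeral_eq_Suc)
  then show ?thesis
    using R_greater_in_rooted[OF ordered] last u'3 unfolding subA_def subC_def by blast
qed

lemma B_C_divisors:
  assumes "7 \<le> n" "subB n u" "subC n v"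
  shows "subB n u' \<and> subC n v'"
proof -
  have u: "n - 1 \<in> u" "n - 3 \<notin> u" and v: "n \<in> v" "n - 4 \<in> v"
    using assms(2,3) unfolding subB_def subC_def by auto
  have "n - 3 \<notin> v"
    using min_vertex_cover_tail[OF min_v _ v] assms(1) by auto
  then have "n - 3 \<notin> u'" "n - 3 \<notin> v'" using in_some_divisor u(2) by blast+
  moreover have "n - 4 \<in> v'"
    using vertex_coverD[OF min_vertex_coverD[OF min_v'], of "n - 4"] \<open>n - 3 \<notin> v'\<close> assms(1)
    by (simp add: Suc_diff_Suc numeral_eq_Suc)
  moreover have "n - 1 \<in> u'" "n \<in> v'"
    using last_vertices u(1) v(1) assms(1) by auto
  ultimately show ?thesis
    using R_greater_in_rooted[OF ordered] unfolding subB_def subC_def by blast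
qed

end

theorem lemma3p10:
  fixes n :: nat and u v u' v' :: "nat set"
  assumes "n \<ge> 7"
    and "u \<in> cover_gens n" and "v \<in> cover_gens n"
    and "u' \<in> cover_gens n" and "v' \<in> cover_gens n"
    and "R_greater n u v" and "R_greater n u' v'"
    and "mdvd (mon u' + mon v') (mon u + mon v)"
  shows "(subA n u \<and> subC n v \<longrightarrow> subA n u' \<and> subC n v')
       \<and> (subB n u \<and> subC n v \<longrightarrow> subB n u' \<and> subC n v')"
proof -
  interpret dividing_generators n u v u' v'
    using assms(2-5,7,8) unfolding cover_gens_def by unfold_locales auto
  show ?thesis
    using A_C_divisors B_C_divisors assms(1) by blast
qed

end
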